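(* Let $\mathcal A,\mathcal B>0$, $\alpha,\beta\in(0,1)$, $h,\tau>0$, $M\ge 2$. Then the $(M-1)\times(M-1)$ matrices $A-g_0^{(\alpha,\beta)}B$ and $\widetilde A-g_0^{(\alpha,\beta)}\widetilde B$ (defined in the context) are nonsingular; consequently the time-stepping linear systems $$\big(A-g_0^{(\alpha,\beta)}B\big)\mathbf U^{k+1}=\big(A+g_1^{(\alpha,\beta)}B\big)\mathbf U^{k}+\sum_{\ell=2}^{k+1}g_\ell^{(\alpha,\beta)}B\,\mathbf U^{k+1-\ell}+\tau A\mathbf F^k+C_k$$ and $$\big(\widetilde A-g_0^{(\alpha,\beta)}\widetilde B\big)\mathbf U^{k+1}=\big(\widetilde A+g_1^{(\alpha,\beta)}\widetilde B\big)\mathbf U^{k}+\sum_{\ell=2}^{k+1}g_\ell^{(\alpha,\beta)}\widetilde B\,\mathbf U^{k+1-\ell}+\tau A\mathbf F^k+\widetilde C_k$$ are uniquely solvable for $\mathbf U^{k+1}$, for any given vectors $\mathbf U^0,\dots,\mathbf U^k,\mathbf F^k,C_k,\widetilde C_k\in\mathbb R^{M-1}$.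
   Context: $\varpi_\ell^{(\gamma)}=(-1)^\ell\binom{\gamma}{\ell}$, $g_0^{(\gamma)}=\frac{1+\gamma}{2}\varpi_0^{(\gamma)}$, $g_\ell^{(\gamma)}=\frac{1+\gamma}{2}\varpi_\ell^{(\gamma)}+\frac{1-\gamma}{2}\varpi_{\ell-1}^{(\gamma)}$ ($\ell\ge1$); $\mu_\alpha=\tau^\alpha\mathcal A/h^2$, $\mu_\beta=\tau^\beta\mathcal B/h^2$, $g_\ell^{(\alpha,\beta)}=\mu_\alpha g_\ell^{(1-\alpha)}+\mu_\beta g_\ell^{(1-\beta)}$. $A$ is the symmetric banded Toeplitz matrix of size $M-1$ with diagonal $\frac{14}{15}$, first off-diagonals $\frac{2}{45}$, second off-diagonals $-\frac1{90}$, zero elsewhere; $B$ is the symmetric banded Toeplitz matrix with diagonal $-\frac52$, first off-diagonals $\frac43$, second off-diagonals $-\frac1{12}$. $\widetilde A$ is the symmetric banded Toeplitz matrix with diagonal $\frac{27}{28}$, off-diagonals $\frac{3}{112}$, $-\frac{3}{280}$, $\frac1{560}$ (at distances $1,2,3$); $\widetilde B$ is the symmetric banded Toeplitz matrix with diagonal $-\frac{49}{18}$, off-diagonals $\frac32$, $-\frac{3}{20}$, $\frac1{90}$ (at distances $1,2,3$). These are the matrix forms of the sixth-order and eighth-order compact schemes for $u_t=(\mathcal A\,{}_{RL}D_{0,t}^{1-\alpha}+\mathcal B\,{}_{RL}D_{0,t}^{1-\beta})u_{xx}+f$, with $C_k,\widetilde C_k$ collecting boundary and ghost-point contributions. *)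

theory Defs
  imports Complex_Main "Jordan_Normal_Form.Determinant"
begin

definition varpi :: "real \<Rightarrow> nat \<Rightarrow> real" where
  "varpi \<gamma> l = (-1) ^ l * (\<gamma> gchoose l)"

definition gw :: "real \<Rightarrow> nat \<Rightarrow> real" where
  "gw \<gamma> l = (if l = 0 then (1 + \<gamma>) / 2 * varpi \<gamma> 0
              else (1 + \<gamma>) / 2 * varpi \<gamma> l + (1 - \<gamma>) / 2 * varpi \<gamma> (l - 1))"

definition gab :: "real \<Rightarrow> real \<Rightarrow> real \<Rightarrow> real \<Rightarrow> real \<Rightarrow> real \<Rightarrow> nat \<Rightarrow> real" where
  "gab cA cB \<alpha> \<beta> \<tau> h l =
     (\<tau> powr \<alpha> * cA / h ^ 2) * gw (1 - \<alpha>) l + (\<tau> powr \<beta> * cB / h ^ 2) * gw (1 - \<beta>) l"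

definition sym_toeplitz :: "nat \<Rightarrow> (nat \<Rightarrow> real) \<Rightarrow> real mat" where
  "sym_toeplitz n c = mat n n (\<lambda>(i, j). c (if i \<le> j then j - i else i - j))"

definition matA :: "nat \<Rightarrow> real mat" where
  "matA n = sym_toeplitz n (\<lambda>d. if d = 0 then 14/15 else if d = 1 then 2/45
                                 else if d = 2 then -1/90 else 0)"

definition matB :: "nat \<Rightarrow> real mat" where
  "matB n = sym_toeplitz n (\<lambda>d. if d = 0 then -5/2 else if d = 1 then 4/3
                                 else if d = 2 then -1/12 else 0)"

definition matAt :: "nat \<Rightarrow> real mat" where
  "matAt n = sym_toeplitz n (\<lambda>d. if d = 0 then 27/28 else if d = 1 then 3/112
                                 else if d = 2 then -3/280 else if d = 3 then 1/560 else 0)"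

definition matBt :: "nat \<Rightarrow> real mat" where
  "matBt n = sym_toeplitz n (\<lambda>d. if d = 0 then -49/18 else if d = 1 then 3/2
                                 else if d = 2 then -3/20 else if d = 3 then 1/90 else 0)"

end

theory Submission
  imports Defs
begin

text \<open>Extend \<open>x\<close> by zeros and let \<open>P e = (\<Sum>i. x i * x (i + e))\<close> be its autocorrelation.
  The quadratic form of a symmetric banded Toeplitz matrix with entries \<open>c d\<close> is
  \<open>c 0 * P 0 + 2 * (\<Sum>d>0. c d * P d)\<close>. Since \<open>\<bar>P e\<bar> \<le> P 0\<close>, the diagonally dominant matrices
  \<open>A\<close> and \<open>\<tilde>A\<close> are positive definite. The energies of the first three forward differences of
  \<open>x\<close> are \<open>2 P 0 - 2 P 1\<close>, \<open>6 P 0 - 8 P 1 + 2 P 2\<close> and \<open>20 P 0 - 30 P 1 + 12 P 2 - 2 P 3\<close>;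
  the forms of \<open>-B\<close> and \<open>-\<tilde>B\<close> are nonnegative combinations of them, so \<open>B\<close> and \<open>\<tilde>B\<close>
  are negative semidefinite. As \<open>g\<^sub>0 \<ge> 0\<close>, the system matrices \<open>A - g\<^sub>0 B\<close> and
  \<open>\<tilde>A - g\<^sub>0 \<tilde>B\<close> are positive definite, hence invertible.\<close>

definition zero_ext :: "real vec \<Rightarrow> int \<Rightarrow> real" where
  "zero_ext x i = (if 0 \<le> i \<and> i < int (dim_vec x) then x $ nat i else 0)"

definition autocorr :: "real vec \<Rightarrow> int \<Rightarrow> real" where
  "autocorr x e = (\<Sum>i<dim_vec x. x $ i * zero_ext x (int i + e))"

lemma sum_zero_ext_shift:
  assumes "finite W" and "{-a..<int (dim_vec x) - a} \<subseteq> W"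
  shows "(\<Sum>i\<in>W. zero_ext x (i + a) * zero_ext x (i + b)) = autocorr x (b - a)"
proof -
  have "(\<Sum>i\<in>W. zero_ext x (i + a) * zero_ext x (i + b))
      = (\<Sum>i\<in>{-a..<int (dim_vec x) - a}. zero_ext x (i + a) * zero_ext x (i + b))"
    using assms by (intro sum.mono_neutral_right) (auto simp: zero_ext_def)
  also have "\<dots> = autocorr x (b - a)"
    unfolding autocorr_def
    by (rule sum.reindex_bij_witness[of _ "\<lambda>j. int j - a" "\<lambda>i. nat (i + a)"])
      (auto simp: zero_ext_def algebra_simps)
  finally show ?thesis .
qed

lemma autocorr_uminus: "autocorr x (- e) = autocorr x e"
proof -
  let ?W = "{-\<bar>e\<bar>..<int (dim_vec x) + \<bar>e\<bar>}"
  have "autocorr x (- e) = (\<Sum>i\<in>?W. zero_ext x (i + e) * zero_ext x (i + 0))"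
    by (subst sum_zero_ext_shift) auto
  also have "\<dots> = (\<Sum>i\<in>?W. zero_ext x (i + 0) * zero_ext x (i + e))"
    by (simp add: mult.commute)
  also have "\<dots> = autocorr x e"
    by (subst sum_zero_ext_shift) auto
  finally show ?thesis .
qed

lemma abs_autocorr_le: "\<bar>autocorr x e\<bar> \<le> autocorr x 0"
proof -
  let ?W = "{-\<bar>e\<bar>..<int (dim_vec x) + \<bar>e\<bar>}"
  let ?z = "zero_ext x"
  have AM_GM: "\<bar>?z i * ?z j\<bar> \<le> (?z i * ?z i + ?z j * ?z j) / 2" for i j
    using sum_squares_bound[of "\<bar>?z i\<bar>" "\<bar>?z j\<bar>"] by (simp add: abs_mult power2_eq_square)
  have "\<bar>autocorr x e\<bar> = \<bar>\<Sum>i\<in>?W. ?z (i + 0) * ?z (i + e)\<bar>"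
    by (subst sum_zero_ext_shift) auto
  also have "\<dots> \<le> (\<Sum>i\<in>?W. (?z (i + 0) * ?z (i + 0) + ?z (i + e) * ?z (i + e)) / 2)"
    by (rule order_trans[OF sum_abs sum_mono]) (rule AM_GM)
  also have "\<dots> = autocorr x 0"
    unfolding sum_divide_distrib[symmetric] sum.distrib
    by (subst (1 2) sum_zero_ext_shift) auto
  finally show ?thesis .
qed

lemma sum_square_filter:
  "(\<Sum>i\<in>{-int k..<int (dim_vec x)}. (\<Sum>j\<le>k. w j * zero_ext x (i + int j))\<^sup>2)
     = (\<Sum>j\<le>k. \<Sum>l\<le>k. w j * w l * autocorr x (int l - int j))"
proof -
  let ?W = "{-int k..<int (dim_vec x)}"
  have "(\<Sum>i\<in>?W. (\<Sum>j\<le>k. w j * zero_ext x (i + int j))\<^sup>2)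
      = (\<Sum>j\<le>k. \<Sum>l\<le>k. w j * w l * (\<Sum>i\<in>?W. zero_ext x (i + int j) * zero_ext x (i + int l)))"
    by (simp add: power2_eq_square sum_product sum_distrib_left sum.swap[of _ ?W] ac_simps)
  also have "\<dots> = (\<Sum>j\<le>k. \<Sum>l\<le>k. w j * w l * autocorr x (int l - int j))"
    by (intro sum.cong refl arg_cong2[where f = times] sum_zero_ext_shift) auto
  finally show ?thesis .
qed

lemma autocorr_first_difference_nonneg: "0 \<le> autocorr x 0 - autocorr x 1"
proof -
  have "0 \<le> (\<Sum>j\<le>1. \<Sum>l\<le>1. [-1, 1] ! j * [-1, 1] ! l * autocorr x (int l - int j))"
    unfolding sum_square_filter[symmetric] by (intro sum_nonneg) simp
  then show ?thesis by (simp add: numeral_eq_Suc autocorr_uminus)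
qed

lemma autocorr_second_difference_nonneg: "0 \<le> 3 * autocorr x 0 - 4 * autocorr x 1 + autocorr x 2"
proof -
  have "0 \<le> (\<Sum>j\<le>2. \<Sum>l\<le>2. [1, -2, 1] ! j * [1, -2, 1] ! l * autocorr x (int l - int j))"
    unfolding sum_square_filter[symmetric] by (intro sum_nonneg) simp
  then show ?thesis by (simp add: numeral_eq_Suc autocorr_uminus)
qed

lemma autocorr_third_difference_nonneg:
  "0 \<le> 10 * autocorr x 0 - 15 * autocorr x 1 + 6 * autocorr x 2 - autocorr x 3"
proof -
  have "0 \<le> (\<Sum>j\<le>3. \<Sum>l\<le>3. [-1, 3, -3, 1] ! j * [-1, 3, -3, 1] ! l * autocorr x (int l - int j))"
    unfolding sum_square_filter[symmetric] by (intro sum_nonneg) simp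
  then show ?thesis by (simp add: numeral_eq_Suc autocorr_uminus)
qed

lemma sym_toeplitz_carrier [simp]: "sym_toeplitz n c \<in> carrier_mat n n"
  by (simp add: sym_toeplitz_def)

lemma sym_toeplitz_mult_vec:
  assumes x: "x \<in> carrier_vec n" and i: "i < n" and band: "\<And>d. p < d \<Longrightarrow> c d = 0"
  shows "(sym_toeplitz n c *\<^sub>v x) $ i = (\<Sum>e\<in>{-int p..int p}. c (nat \<bar>e\<bar>) * zero_ext x (int i + e))"
proof -
  let ?f = "\<lambda>j. c (nat \<bar>j - int i\<bar>) * zero_ext x j"
  have "(sym_toeplitz n c *\<^sub>v x) $ i = (\<Sum>j<n. c (if i \<le> j then j - i else i - j) * x $ j)"
    using x i by (simp add: sym_toeplitz_def mult_mat_vec_def scalar_prod_def row_def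
        lessThan_atLeast0 mult.commute)
  also have "\<dots> = (\<Sum>j\<in>{0..<int n}. ?f j)"
    using x by (intro sum.reindex_bij_witness[of _ nat int]) (auto simp: zero_ext_def nat_diff_distrib)
  also have "\<dots> = (\<Sum>j\<in>{0..<int n} \<union> {int i - int p..int i + int p}. ?f j)"
    using x by (intro sum.mono_neutral_left) (auto simp: zero_ext_def)
  also have "\<dots> = (\<Sum>j\<in>{int i - int p..int i + int p}. ?f j)"
    using band by (intro sum.mono_neutral_right) auto
  also have "\<dots> = (\<Sum>e\<in>{-int p..int p}. c (nat \<bar>e\<bar>) * zero_ext x (int i + e))"
    by (intro sum.reindex_bij_witness[of _ "\<lambda>j. j + int i" "\<lambda>j. j - int i"]) auto
  finally show ?thesis .
qed

lemma sym_toeplitz_quadratic_form: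
  assumes x: "x \<in> carrier_vec n" and band: "\<And>d. p < d \<Longrightarrow> c d = 0"
  shows "x \<bullet> (sym_toeplitz n c *\<^sub>v x) = (\<Sum>e\<in>{-int p..int p}. c (nat \<bar>e\<bar>) * autocorr x e)"
proof -
  have "x \<bullet> (sym_toeplitz n c *\<^sub>v x) = (\<Sum>i<n. x $ i * (sym_toeplitz n c *\<^sub>v x) $ i)"
    by (simp add: scalar_prod_def lessThan_atLeast0 sym_toeplitz_def)
  also have "\<dots> = (\<Sum>i<n. x $ i * (\<Sum>e\<in>{-int p..int p}. c (nat \<bar>e\<bar>) * zero_ext x (int i + e)))"
    by (intro sum.cong refl) (simp add: sym_toeplitz_mult_vec[OF x _ band])
  also have "\<dots> = (\<Sum>e\<in>{-int p..int p}. c (nat \<bar>e\<bar>) * autocorr x e)"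
    using x by (simp add: autocorr_def sum_distrib_left sum.swap[of _ "{-int p..int p}"] ac_simps)
  finally show ?thesis .
qed

lemma sym_toeplitz_bandwidth_3_quadratic_form:
  assumes "x \<in> carrier_vec n" and "\<And>d. 3 < d \<Longrightarrow> c d = 0"
  shows "x \<bullet> (sym_toeplitz n c *\<^sub>v x)
    = c 0 * autocorr x 0 + 2 * (c 1 * autocorr x 1 + c 2 * autocorr x 2 + c 3 * autocorr x 3)"
proof -
  have "{-3..3::int} = {-3, -2, -1, 0, 1, 2, 3}" by auto
  then show ?thesis
    using sym_toeplitz_quadratic_form[of x n 3 c] assms by (simp add: autocorr_uminus nat_eq_iff)
qed

lemma autocorr_0_pos:
  assumes "x \<in> carrier_vec n" and "x \<noteq> 0\<^sub>v n"
  shows "0 < autocorr x 0"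
proof -
  obtain i where i: "i < n" "x $ i \<noteq> 0"
    using assms by (metis carrier_vecD eq_vecI index_zero_vec(1,2))
  have "autocorr x 0 = (\<Sum>j<n. (x $ j)\<^sup>2)"
    using assms(1) by (simp add: autocorr_def zero_ext_def power2_eq_square)
  also have "\<dots> > 0"
    using i by (intro sum_pos2[of _ i]) auto
  finally show ?thesis .
qed

lemma matA_quadratic_form_pos:
  assumes "x \<in> carrier_vec n" and "x \<noteq> 0\<^sub>v n"
  shows "0 < x \<bullet> (matA n *\<^sub>v x)"
  using sym_toeplitz_bandwidth_3_quadratic_form[OF assms(1)] autocorr_0_pos[OF assms]
    abs_autocorr_le[of x 1] abs_autocorr_le[of x 2]
  unfolding matA_def by simp

lemma matB_quadratic_form_nonpos:
  assumes "x \<in> carrier_vec n"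
  shows "x \<bullet> (matB n *\<^sub>v x) \<le> 0"
  using sym_toeplitz_bandwidth_3_quadratic_form[OF assms]
    autocorr_first_difference_nonneg[of x] autocorr_second_difference_nonneg[of x]
  unfolding matB_def by simp

lemma matAt_quadratic_form_pos:
  assumes "x \<in> carrier_vec n" and "x \<noteq> 0\<^sub>v n"
  shows "0 < x \<bullet> (matAt n *\<^sub>v x)"
  using sym_toeplitz_bandwidth_3_quadratic_form[OF assms(1)] autocorr_0_pos[OF assms]
    abs_autocorr_le[of x 1] abs_autocorr_le[of x 2] abs_autocorr_le[of x 3]
  unfolding matAt_def by simp

lemma matBt_quadratic_form_nonpos:
  assumes "x \<in> carrier_vec n"
  shows "x \<bullet> (matBt n *\<^sub>v x) \<le> 0"
  using sym_toeplitz_bandwidth_3_quadratic_form[OF assms]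
    autocorr_first_difference_nonneg[of x] autocorr_second_difference_nonneg[of x]
    autocorr_third_difference_nonneg[of x]
  unfolding matBt_def by simp

lemma det_minus_smult_nonzero:
  fixes A B :: "real mat"
  assumes A: "A \<in> carrier_mat n n" and B: "B \<in> carrier_mat n n"
    and A_pos: "\<And>x. x \<in> carrier_vec n \<Longrightarrow> x \<noteq> 0\<^sub>v n \<Longrightarrow> 0 < x \<bullet> (A *\<^sub>v x)"
    and B_nonpos: "\<And>x. x \<in> carrier_vec n \<Longrightarrow> x \<bullet> (B *\<^sub>v x) \<le> 0"
    and g: "0 \<le> g"
  shows "det (A - g \<cdot>\<^sub>m B) \<noteq> 0"
proof
  assume "det (A - g \<cdot>\<^sub>m B) = 0"
  moreover have "A - g \<cdot>\<^sub>m B \<in> carrier_mat n n"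
    using A B by auto
  ultimately obtain v where v: "v \<in> carrier_vec n" "v \<noteq> 0\<^sub>v n" "(A - g \<cdot>\<^sub>m B) *\<^sub>v v = 0\<^sub>v n"
    using det_0_iff_vec_prod_zero by blast
  have "(g \<cdot>\<^sub>m B) *\<^sub>v v = g \<cdot>\<^sub>v (B *\<^sub>v v)"
    using B v(1) by (intro eq_vecI) auto
  then have "v \<bullet> ((A - g \<cdot>\<^sub>m B) *\<^sub>v v) = v \<bullet> (A *\<^sub>v v) - g * (v \<bullet> (B *\<^sub>v v))"
    using A B v(1) by (simp add: minus_mult_distrib_mat_vec scalar_prod_minus_distrib)
  also have "\<dots> > 0"
    using A_pos[OF v(1,2)] mult_nonneg_nonpos[OF g B_nonpos[OF v(1)]] by linarith
  finally show False
    using v(1,3) by simp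
qed

lemma unique_solution_if_det_nonzero:
  fixes A :: "real mat"
  assumes A: "A \<in> carrier_mat n n" and det: "det A \<noteq> 0" and r: "r \<in> carrier_vec n"
  shows "\<exists>!X. X \<in> carrier_vec n \<and> A *\<^sub>v X = r"
proof -
  obtain B where B: "B \<in> carrier_mat n n" and AB: "A * B = 1\<^sub>m n" and BA: "B * A = 1\<^sub>m n"
    using det_non_zero_imp_unit[OF A det] unfolding Units_def ring_mat_def by auto
  show ?thesis
  proof (rule ex1I[of _ "B *\<^sub>v r"])
    show "B *\<^sub>v r \<in> carrier_vec n \<and> A *\<^sub>v (B *\<^sub>v r) = r"
      using A B r AB by (simp flip: assoc_mult_mat_vec)
  next
    fix X assume "X \<in> carrier_vec n \<and> A *\<^sub>v X = r"
    then show "X = B *\<^sub>v r"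
      using A B BA by (metis assoc_mult_mat_vec one_mult_mat_vec)
  qed
qed

lemma gab_0_nonneg:
  assumes "0 \<le> cA" and "0 \<le> cB" and "\<alpha> \<le> 2" and "\<beta> \<le> 2"
  shows "0 \<le> gab cA cB \<alpha> \<beta> \<tau> h 0"
  using assms by (simp add: gab_def gw_def varpi_def)

theorem theorem1:
  fixes cA cB \<alpha> \<beta> h \<tau> :: real and M :: nat
  assumes "cA > 0" and "cB > 0" and "0 < \<alpha>" and "\<alpha> < 1" and "0 < \<beta>" and "\<beta> < 1"
    and "h > 0" and "\<tau> > 0" and "M \<ge> 2"
  defines "g \<equiv> gab cA cB \<alpha> \<beta> \<tau> h"
  shows "det (matA (M - 1) - g 0 \<cdot>\<^sub>m matB (M - 1)) \<noteq> 0
       \<and> det (matAt (M - 1) - g 0 \<cdot>\<^sub>m matBt (M - 1)) \<noteq> 0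
       \<and> (\<forall>(k::nat) (U::nat \<Rightarrow> real vec) F C Ct.
            (\<forall>j\<le>k. U j \<in> carrier_vec (M - 1)) \<longrightarrow> F \<in> carrier_vec (M - 1)
            \<longrightarrow> C \<in> carrier_vec (M - 1) \<longrightarrow> Ct \<in> carrier_vec (M - 1) \<longrightarrow>
            (\<exists>!X. X \<in> carrier_vec (M - 1) \<and>
               (matA (M - 1) - g 0 \<cdot>\<^sub>m matB (M - 1)) *\<^sub>v X =
                 (matA (M - 1) + g 1 \<cdot>\<^sub>m matB (M - 1)) *\<^sub>v U k
                 + vec (M - 1) (\<lambda>i. \<Sum>l = 2..k + 1. (g l \<cdot>\<^sub>v (matB (M - 1) *\<^sub>v U (k + 1 - l))) $ i)
                 + \<tau> \<cdot>\<^sub>v (matA (M - 1) *\<^sub>v F) + C)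
          \<and> (\<exists>!X. X \<in> carrier_vec (M - 1) \<and>
               (matAt (M - 1) - g 0 \<cdot>\<^sub>m matBt (M - 1)) *\<^sub>v X =
                 (matAt (M - 1) + g 1 \<cdot>\<^sub>m matBt (M - 1)) *\<^sub>v U k
                 + vec (M - 1) (\<lambda>i. \<Sum>l = 2..k + 1. (g l \<cdot>\<^sub>v (matBt (M - 1) *\<^sub>v U (k + 1 - l))) $ i)
                 + \<tau> \<cdot>\<^sub>v (matA (M - 1) *\<^sub>v F) + Ct))"
proof -
  let ?n = "M - 1"
  have carrier: "matA ?n \<in> carrier_mat ?n ?n" "matB ?n \<in> carrier_mat ?n ?n"
    "matAt ?n \<in> carrier_mat ?n ?n" "matBt ?n \<in> carrier_mat ?n ?n"
    by (simp_all add: matA_def matB_def matAt_def matBt_def)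
  have g0: "0 \<le> g 0"
    unfolding g_def using assms by (intro gab_0_nonneg) auto
  have system_carrier: "matA ?n - g 0 \<cdot>\<^sub>m matB ?n \<in> carrier_mat ?n ?n"
    "matAt ?n - g 0 \<cdot>\<^sub>m matBt ?n \<in> carrier_mat ?n ?n"
    using carrier by auto
  have det: "det (matA ?n - g 0 \<cdot>\<^sub>m matB ?n) \<noteq> 0" "det (matAt ?n - g 0 \<cdot>\<^sub>m matBt ?n) \<noteq> 0"
    using carrier g0 matA_quadratic_form_pos matB_quadratic_form_nonpos
      matAt_quadratic_form_pos matBt_quadratic_form_nonpos
    by (simp_all add: det_minus_smult_nonzero)
  have rhs_carrier: "a + b \<in> carrier_vec ?n" if "b \<in> carrier_vec ?n" for a b :: "real vec"
    using that by (metis carrier_vecD carrier_vecI index_add_vec(2))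
  show ?thesis
    by (intro conjI det allI impI rhs_carrier
        unique_solution_if_det_nonzero[OF system_carrier(1) det(1)]
        unique_solution_if_det_nonzero[OF system_carrier(2) det(2)]) auto
qed

end
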